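(* Let $n\ge 2$ and let $\mathbf{c}=(c_1,\dots,c_n)\in\mathbb{R}^n_+$ be a nonnegative vector with $c_1=0$ such that the generalized Pascal matrix with generating vector $\mathbf{c}$ (the case $m=2$) is positive definite. Then for every $m\ge 2$, the $m$th order $n$-dimensional generalized Pascal tensor with generating vector $\mathbf{c}$ is strongly completely positive, and if $m$ is even it is positive definite.
   Context: For a nonnegative $\mathbf{c}\in\mathbb{R}^n$ and $m\ge 2$, the $m$th order $n$-dimensional generalized Pascal tensor with generating vector $\mathbf{c}$ is $\mathcal{A}=(a_{i_1\dots i_m})$ with $a_{i_1\dots i_m}=\frac{\Gamma(c_{i_1}+\dots+c_{i_m}+1)}{\Gamma(c_{i_1}+1)\cdots\Gamma(c_{i_m}+1)}$; for $m=2$ it is called the generalized Pascal matrix. A symmetric tensor of order $m$, dimension $n$ is strongly completely positive if it equals $\sum_{k=1}^r(\mathbf{u}^{(k)})^m$ for nonnegative vectors $\mathbf{u}^{(k)}\in\mathbb{R}^n$ spanning $\mathbb{R}^n$, where $\mathbf{u}^m$ has entries $u_{i_1}\cdots u_{i_m}$. For even $m$, it is positive definite if $\sum a_{i_1\dots i_m}x_{i_1}\cdots x_{i_m}>0$ for all nonzero $\mathbf{x}\in\mathbb{R}^n$. *)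

theory Defs
  imports "HOL-Analysis.Analysis"
begin

(* Vectors in R^n are functions nat => real, only indices 0..n-1 matter
   (paper's index i corresponds to i-1 here).
   An m-th order n-dimensional tensor is a function on index lists
   (i_1,...,i_m), i.e. lists of length m with entries < n. *)

definition tensor_indices :: "nat \<Rightarrow> nat \<Rightarrow> nat list set" where
  "tensor_indices n m = {is. length is = m \<and> set is \<subseteq> {..<n}}"

definition gen_pascal_tensor :: "(nat \<Rightarrow> real) \<Rightarrow> nat list \<Rightarrow> real" where
  "gen_pascal_tensor c is =
     Gamma (sum_list (map c is) + 1) / prod_list (map (\<lambda>i. Gamma (c i + 1)) is)"

definition symmetric_tensor :: "nat \<Rightarrow> nat \<Rightarrow> (nat list \<Rightarrow> real) \<Rightarrow> bool" where
  "symmetric_tensor n m A \<longleftrightarrow>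
     (\<forall>is \<in> tensor_indices n m. \<forall>js \<in> tensor_indices n m.
        mset is = mset js \<longrightarrow> A is = A js)"

definition tensor_power :: "(nat \<Rightarrow> real) \<Rightarrow> nat list \<Rightarrow> real" where
  "tensor_power u is = prod_list (map u is)"

definition strongly_completely_positive :: "nat \<Rightarrow> nat \<Rightarrow> (nat list \<Rightarrow> real) \<Rightarrow> bool" where
  "strongly_completely_positive n m A \<longleftrightarrow>
     symmetric_tensor n m A \<and>
     (\<exists>(r::nat) (u :: nat \<Rightarrow> nat \<Rightarrow> real).
        (\<forall>k<r. \<forall>i<n. u k i \<ge> 0) \<and>
        \<comment> \<open>the vectors u k (k < r), restricted to indices < n, span R^n\<close>
        (\<forall>x :: nat \<Rightarrow> real. \<exists>a :: nat \<Rightarrow> real. \<forall>i<n. x i = (\<Sum>k<r. a k * u k i)) \<and>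
        (\<forall>is \<in> tensor_indices n m. A is = (\<Sum>k<r. tensor_power (u k) is)))"

definition tensor_form :: "nat \<Rightarrow> nat \<Rightarrow> (nat list \<Rightarrow> real) \<Rightarrow> (nat \<Rightarrow> real) \<Rightarrow> real" where
  "tensor_form n m A x = (\<Sum>is \<in> tensor_indices n m. A is * prod_list (map x is))"

definition positive_definite_tensor :: "nat \<Rightarrow> nat \<Rightarrow> (nat list \<Rightarrow> real) \<Rightarrow> bool" where
  "positive_definite_tensor n m A \<longleftrightarrow>
     (\<forall>x :: nat \<Rightarrow> real. (\<exists>i<n. x i \<noteq> 0) \<longrightarrow> tensor_form n m A x > 0)"

end

theory Submission
  imports Defs
begin

text \<open>
  Each entry of the Pascal tensor is a moment: with \<open>v\<^sub>i(t) = t powr c\<^sub>i / \<Gamma>(c\<^sub>i + 1) \<ge> 0\<close>,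
  \<open>A(i\<^sub>1, \<dots>, i\<^sub>m) = \<Gamma>(c\<^sub>i\<^sub>1 + \<dots> + c\<^sub>i\<^sub>m + 1) / \<Prod>\<^sub>j \<Gamma>(c\<^sub>i\<^sub>j + 1)\<close> is the integral over
  \<open>t \<ge> 0\<close> of \<open>e\<^sup>-\<^sup>t v\<^sub>i\<^sub>1(t) \<cdots> v\<^sub>i\<^sub>m(t)\<close>, so \<open>A\<close> is an integral of rank-one tensors \<open>v(t)\<^sup>m\<close>.
  Moving a weight \<open>1 + t powr B\<close> into the measure and substituting \<open>y = t / (1 + t)\<close> makes
  the integrand continuous on the compact interval \<open>[0, 1]\<close>; Riemann sums, Caratheodory's
  theorem for cones and a compactness argument then turn the integral into a finite sum
  \<open>\<Sum>\<^sub>k u\<^sub>k\<^sup>m\<close> with nonnegative vectors \<open>u\<^sub>k\<close>. Since \<open>c\<^sub>1 = 0\<close>, the Pascal matrix is the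
  slice \<open>A(1, \<dots>, 1, i, j) = \<Sum>\<^sub>k u\<^sub>k\<^sub>1\<^sup>m\<^sup>-\<^sup>2 u\<^sub>k\<^sub>i u\<^sub>k\<^sub>j\<close> of the tensor, and its positive
  definiteness forces the \<open>u\<^sub>k\<close> to span \<open>\<real>\<^sup>n\<close>. For even \<open>m\<close> the form \<open>\<Sum>\<^sub>k (u\<^sub>k \<bullet> x)\<^sup>m\<close>
  therefore vanishes only at \<open>x = 0\<close>.
\<close>

section \<open>Finite linear algebra\<close>

lemma exists_linear_dependence:
  fixes g :: "'j \<Rightarrow> 'd \<Rightarrow> real"
  assumes "finite D" "finite J" "card D < card J"
  shows "\<exists>\<alpha>. (\<exists>j\<in>J. \<alpha> j \<noteq> 0) \<and> (\<forall>d\<in>D. (\<Sum>j\<in>J. \<alpha> j * g j d) = 0)"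
  using assms
proof (induction D arbitrary: J g rule: finite_induct)
  case empty
  then obtain j where "j \<in> J" by fastforce
  then show ?case by (intro exI[of _ "\<lambda>_. 1"]) auto
next
  case (insert d0 D)
  show ?case
  proof (cases "\<forall>j\<in>J. g j d0 = 0")
    case True
    have "card D < card J" using insert by simp
    with insert.IH[OF insert.prems(1)] show ?thesis using True by auto
  next
    case False
    then obtain j0 where j0: "j0 \<in> J" "g j0 d0 \<noteq> 0" by blast
    \<comment> \<open>Gaussian elimination: clear coordinate d0 with the pivot j0, recurse on the remaining vectors.\<close>
    define g' where "g' j d = g j d - (g j d0 / g j0 d0) * g j0 d" for j d
    have "card D < card (J - {j0})" using insert j0 by simp
    from insert.IH[OF _ this, of g'] insert.prems(1) obtain \<beta> where
      \<beta>: "\<exists>j\<in>J - {j0}. \<beta> j \<noteq> 0" "\<forall>d\<in>D. (\<Sum>j\<in>J - {j0}. \<beta> j * g' j d) = 0" by auto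
    define \<alpha> where "\<alpha> j = (if j = j0 then - (\<Sum>j\<in>J - {j0}. \<beta> j * g j d0) / g j0 d0 else \<beta> j)" for j
    have split: "(\<Sum>j\<in>J. \<alpha> j * g j d) = \<alpha> j0 * g j0 d + (\<Sum>j\<in>J - {j0}. \<beta> j * g j d)" for d
      using insert.prems(1) j0(1) by (simp add: sum.remove \<alpha>_def)
    have "(\<Sum>j\<in>J. \<alpha> j * g j d) = 0" if d: "d \<in> insert d0 D" for d
    proof (cases "d = d0")
      case True
      then show ?thesis unfolding split using j0 by (simp add: \<alpha>_def)
    next
      case False
      with d have "d \<in> D" by auto
      moreover have "(\<Sum>j\<in>J - {j0}. \<beta> j * g' j d) = (\<Sum>j\<in>J - {j0}. \<beta> j * g j d)
            - (\<Sum>j\<in>J - {j0}. \<beta> j * g j d0) / g j0 d0 * g j0 d"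
        by (simp add: g'_def algebra_simps sum_subtractf sum_distrib_left sum_distrib_right sum_divide_distrib)
      ultimately show ?thesis unfolding split using \<beta>(2) by (simp add: \<alpha>_def)
    qed
    moreover have "\<exists>j\<in>J. \<alpha> j \<noteq> 0" using \<beta>(1) by (auto simp: \<alpha>_def)
    ultimately show ?thesis by blast
  qed
qed

lemma conic_combination_remove_one:
  fixes g :: "'j \<Rightarrow> 'd \<Rightarrow> real" and w :: "'j \<Rightarrow> real"
  assumes "finite D" "finite J" "card D < card J" "\<forall>j\<in>J. 0 \<le> w j"
  shows "\<exists>j0\<in>J. \<exists>w'. (\<forall>j\<in>J - {j0}. 0 \<le> w' j) \<and>
           (\<forall>d\<in>D. (\<Sum>j\<in>J - {j0}. w' j * g j d) = (\<Sum>j\<in>J. w j * g j d))"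
proof -
  obtain \<alpha> where \<alpha>: "\<exists>j\<in>J. \<alpha> j \<noteq> 0" "\<forall>d\<in>D. (\<Sum>j\<in>J. \<alpha> j * g j d) = 0"
    using exists_linear_dependence[OF assms(1-3)] by blast
  obtain \<beta> where \<beta>: "\<exists>j\<in>J. 0 < \<beta> j" "\<forall>d\<in>D. (\<Sum>j\<in>J. \<beta> j * g j d) = 0"
  proof (cases "\<exists>j\<in>J. 0 < \<alpha> j")
    case True
    then show ?thesis using \<alpha>(2) by (rule that)
  next
    case False
    from \<alpha>(1) obtain j where "j \<in> J" "\<alpha> j \<noteq> 0" by blast
    with False have "\<exists>j\<in>J. 0 < - \<alpha> j" by force
    moreover have "\<forall>d\<in>D. (\<Sum>j\<in>J. - \<alpha> j * g j d) = 0" using \<alpha>(2) by (simp add: sum_negf)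
    ultimately show ?thesis by (rule that)
  qed
  \<comment> \<open>Move from \<open>w\<close> along \<open>- \<beta>\<close> until the first weight hits zero.\<close>
  define T where "T = {j\<in>J. 0 < \<beta> j}"
  have T: "finite T" "T \<noteq> {}" using assms(2) \<beta>(1) by (auto simp: T_def)
  define t where "t = Min ((\<lambda>j. w j / \<beta> j) ` T)"
  have "t \<in> (\<lambda>j. w j / \<beta> j) ` T" unfolding t_def using T by (intro Min_in) auto
  then obtain j0 where j0: "j0 \<in> J" "0 < \<beta> j0" "t = w j0 / \<beta> j0" by (auto simp: T_def)
  have t: "0 \<le> t" using j0 assms(4) by simp
  define w' where "w' j = w j - t * \<beta> j" for j
  have "0 \<le> w' j" if "j \<in> J" for j
  proof (cases "0 < \<beta> j")
    case True
    then have "t \<le> w j / \<beta> j" unfolding t_def using T that by (intro Min_le) (auto simp: T_def)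
    then show ?thesis using True by (simp add: w'_def field_simps)
  next
    case False
    then have "t * \<beta> j \<le> 0" using t by (simp add: mult_nonneg_nonpos)
    moreover have "0 \<le> w j" using assms(4) that by blast
    ultimately show ?thesis by (simp add: w'_def)
  qed
  moreover have "(\<Sum>j\<in>J - {j0}. w' j * g j d) = (\<Sum>j\<in>J. w j * g j d)" if "d \<in> D" for d
  proof -
    have "w' j0 = 0" using j0 by (simp add: w'_def)
    then have "(\<Sum>j\<in>J - {j0}. w' j * g j d) = (\<Sum>j\<in>J. w' j * g j d)"
      using assms(2) j0(1) by (simp add: sum.remove)
    also have "\<dots> = (\<Sum>j\<in>J. w j * g j d) - t * (\<Sum>j\<in>J. \<beta> j * g j d)"
      by (simp add: w'_def algebra_simps sum_subtractf sum_distrib_left)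
    finally show ?thesis using \<beta>(2) that by simp
  qed
  ultimately show ?thesis using j0(1) by blast
qed

lemma conic_caratheodory:
  fixes g :: "'j \<Rightarrow> 'd \<Rightarrow> real" and w :: "'j \<Rightarrow> real"
  assumes "finite D" "finite J" "\<forall>j\<in>J. 0 \<le> w j"
  shows "\<exists>J' w'. J' \<subseteq> J \<and> card J' \<le> card D \<and> (\<forall>j\<in>J'. 0 \<le> w' j) \<and>
           (\<forall>d\<in>D. (\<Sum>j\<in>J'. w' j * g j d) = (\<Sum>j\<in>J. w j * g j d))"
  using assms(2,3)
proof (induction "card J" arbitrary: J w rule: less_induct)
  case less
  show ?case
  proof (cases "card J \<le> card D")
    case True
    then show ?thesis using less.prems by blast
  next
    case False
    then have "card D < card J" by simp
    then obtain j0 w' where j0: "j0 \<in> J" "\<forall>j\<in>J - {j0}. 0 \<le> w' j"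
      "\<forall>d\<in>D. (\<Sum>j\<in>J - {j0}. w' j * g j d) = (\<Sum>j\<in>J. w j * g j d)"
      using conic_combination_remove_one[OF assms(1) less.prems(1) _ less.prems(2), of g] by auto
    have "card (J - {j0}) < card J" using card_Diff1_less[OF less.prems(1) j0(1)] .
    from less.hyps[OF this _ j0(2)] less.prems(1) obtain J' w'' where
      "J' \<subseteq> J - {j0}" "card J' \<le> card D" "\<forall>j\<in>J'. 0 \<le> w'' j"
      "\<forall>d\<in>D. (\<Sum>j\<in>J'. w'' j * g j d) = (\<Sum>j\<in>J - {j0}. w' j * g j d)"
      by auto
    with j0(3) show ?thesis by (metis Diff_subset subset_trans)
  qed
qed

lemma positive_definite_matrix_surj:
  fixes P :: "nat \<Rightarrow> nat \<Rightarrow> real"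
  assumes pd: "\<forall>z. (\<exists>i<n. z i \<noteq> 0) \<longrightarrow> 0 < (\<Sum>i<n. \<Sum>j<n. P i j * (z i * z j))"
  shows "\<exists>z. \<forall>i<n. x i = (\<Sum>j<n. P i j * z j)"
proof -
  \<comment> \<open>The columns of \<open>P\<close> together with \<open>x\<close> are \<open>n + 1\<close> vectors in \<open>\<real>\<^sup>n\<close>.\<close>
  define g where "g j i = (if j < n then P i j else x i)" for j i
  obtain \<alpha> where \<alpha>: "\<exists>j<Suc n. \<alpha> j \<noteq> 0" "\<forall>i<n. (\<Sum>j<Suc n. \<alpha> j * g j i) = 0"
    using exists_linear_dependence[of "{..<n}" "{..<Suc n}" g] by auto
  have rel: "(\<Sum>j<n. \<alpha> j * P i j) + \<alpha> n * x i = 0" if "i < n" for i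
    using \<alpha>(2) that by (simp add: g_def)
  show ?thesis
  proof (cases "\<alpha> n = 0")
    case True
    then have "\<exists>i<n. \<alpha> i \<noteq> 0" using \<alpha>(1) less_Suc_eq by auto
    moreover have "(\<Sum>i<n. \<Sum>j<n. P i j * (\<alpha> i * \<alpha> j)) = (\<Sum>i<n. \<alpha> i * (\<Sum>j<n. \<alpha> j * P i j))"
      by (simp add: sum_distrib_left algebra_simps)
    moreover have "(\<Sum>i<n. \<alpha> i * (\<Sum>j<n. \<alpha> j * P i j)) = 0" using rel True by simp
    ultimately show ?thesis using pd[rule_format, of \<alpha>] by simp
  next
    case False
    have "\<forall>i<n. x i = (\<Sum>j<n. P i j * (- \<alpha> j / \<alpha> n))"
    proof (intro allI impI)
      fix i assume "i < n"
      have "(\<Sum>j<n. P i j * (- \<alpha> j / \<alpha> n)) = - (\<Sum>j<n. \<alpha> j * P i j) / \<alpha> n"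
        by (simp add: sum_divide_distrib sum_negf algebra_simps)
      also have "\<dots> = x i" using rel[OF \<open>i < n\<close>] False by (simp add: field_simps)
      finally show "x i = (\<Sum>j<n. P i j * (- \<alpha> j / \<alpha> n))" by (rule sym)
    qed
    then show ?thesis by (rule exI[where x = "\<lambda>j. - \<alpha> j / \<alpha> n"])
  qed
qed

lemma gram_positive_definite_imp_span:
  fixes P u :: "nat \<Rightarrow> nat \<Rightarrow> real"
  assumes gram: "\<forall>i<n. \<forall>j<n. P i j = (\<Sum>k<r. a k * u k i * u k j)"
    and pd: "\<forall>z. (\<exists>i<n. z i \<noteq> 0) \<longrightarrow> 0 < (\<Sum>i<n. \<Sum>j<n. P i j * (z i * z j))"
  shows "\<exists>b. \<forall>i<n. x i = (\<Sum>k<r. b k * u k i)"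
proof -
  from positive_definite_matrix_surj[OF pd, of x] obtain z
    where z: "\<forall>i<n. x i = (\<Sum>j<n. P i j * z j)" ..
  have "\<forall>i<n. x i = (\<Sum>k<r. (a k * (\<Sum>j<n. u k j * z j)) * u k i)"
  proof (intro allI impI)
    fix i assume "i < n"
    have "x i = (\<Sum>j<n. (\<Sum>k<r. a k * u k i * u k j) * z j)" using z gram \<open>i < n\<close> by simp
    also have "\<dots> = (\<Sum>k<r. (a k * (\<Sum>j<n. u k j * z j)) * u k i)"
      by (simp add: sum_distrib_left sum_distrib_right sum.swap[of _ "{..<n}"] algebra_simps)
    finally show "x i = (\<Sum>k<r. (a k * (\<Sum>j<n. u k j * z j)) * u k i)" .
  qed
  then show ?thesis by (rule exI[where x = "\<lambda>k. a k * (\<Sum>j<n. u k j * z j)"])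
qed

section \<open>Positive quadrature on the half line\<close>

lemma sum_padded_bij_betw:
  assumes "bij_betw f {..<card J} J" "card J \<le> K"
  shows "(\<Sum>k<K. if k < card J then F (f k) else 0) = (\<Sum>j\<in>J. F j)"
proof -
  have "(\<Sum>k<K. if k < card J then F (f k) else 0) = (\<Sum>k<card J. if k < card J then F (f k) else 0)"
    using assms(2) by (intro sum.mono_neutral_right) auto
  also have "\<dots> = (\<Sum>j\<in>J. F j)" using sum.reindex_bij_betw[OF assms(1)] by simp
  finally show ?thesis .
qed

lemma compact_imp_convergent_subseq_tuple:
  fixes X :: "nat \<Rightarrow> nat \<Rightarrow> 'a::metric_space"
  assumes "compact S" "\<forall>N. \<forall>k<K. X N k \<in> S"
  shows "\<exists>r L. strict_mono r \<and> (\<forall>k<K. L k \<in> S \<and> (\<lambda>N. X (r N) k) \<longlonglongrightarrow> L k)"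
  using assms(2)
proof (induction K)
  case 0
  show ?case using strict_mono_id by auto
next
  case (Suc K)
  then obtain r L where r: "strict_mono r" "\<forall>k<K. L k \<in> S \<and> (\<lambda>N. X (r N) k) \<longlonglongrightarrow> L k"
    by auto
  have "\<forall>N. X (r N) K \<in> S" using Suc.prems by blast
  with compact_imp_seq_compact[OF assms(1)] obtain l r'
    where r': "l \<in> S" "strict_mono r'" "((\<lambda>N. X (r N) K) \<circ> r') \<longlonglongrightarrow> l"
    by (rule seq_compactE)
  have "(L(K := l)) k \<in> S \<and> (\<lambda>N. X ((r \<circ> r') N) k) \<longlonglongrightarrow> (L(K := l)) k" if "k < Suc K" for k
  proof (cases "k = K")
    case True
    then show ?thesis using r' by (simp add: o_def)
  next
    case False
    then have "k < K" using that by simp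
    then show ?thesis using r(2) LIMSEQ_subseq_LIMSEQ[OF _ r'(2), of "\<lambda>N. X (r N) k"] False
      by (simp add: o_def)
  qed
  then show ?case using strict_mono_o[OF r(1) r'(2)] by blast
qed

lemma has_integral_atLeast_truncate:
  fixes f :: "real \<Rightarrow> real"
  assumes "(f has_integral v) {a..}" "0 < e"
  shows "\<exists>B. \<forall>b\<ge>B. \<exists>z. (f has_integral z) {a..b} \<and> \<bar>z - v\<bar> < e"
proof -
  have "\<nexists>a' b'. {a..} = cbox a' b'"
  proof
    assume "\<exists>a' b'. {a..} = cbox a' b'"
    then obtain a' b' where "{a..} = {a'..b'::real}" by auto
    moreover have "max a b' + 1 \<in> {a..}" by simp
    ultimately show False by auto
  qed
  from has_integral_altD[OF assms(1) this assms(2)] obtain B where B: "0 < B"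
    "\<forall>a' b'. ball 0 B \<subseteq> cbox a' b' \<longrightarrow>
       (\<exists>z. ((\<lambda>x. if x \<in> {a..} then f x else 0) has_integral z) (cbox a' b') \<and> norm (z - v) < e)"
    by blast
  have "\<exists>z. (f has_integral z) {a..b} \<and> \<bar>z - v\<bar> < e" if b: "max B \<bar>a\<bar> \<le> b" for b
  proof -
    have "ball 0 B \<subseteq> cbox (-b) b" using b by (auto simp: dist_real_def)
    then obtain z where "((\<lambda>x. if x \<in> {a..} then f x else 0) has_integral z) (cbox (-b) b)" "\<bar>z - v\<bar> < e"
      using B(2) unfolding real_norm_def by blast
    moreover have "{a..} \<inter> cbox (-b) b = {a..b}" using b by auto
    ultimately show ?thesis by (metis has_integral_restrict_Int)
  qed
  then show ?thesis by blast
qed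

lemma riemann_sums_approx_integrals_atLeast:
  fixes f :: "'d \<Rightarrow> real \<Rightarrow> real"
  assumes "finite D" "\<forall>d\<in>D. (f d has_integral v d) {a..}" "0 < e"
  shows "\<exists>b p. p tagged_division_of {a..b} \<and>
           (\<forall>d\<in>D. \<bar>(\<Sum>(x, K)\<in>p. Henstock_Kurzweil_Integration.content K * f d x) - v d\<bar> < e)"
proof -
  have "\<forall>d\<in>D. \<exists>B. \<forall>b\<ge>B. \<exists>z. (f d has_integral z) {a..b} \<and> \<bar>z - v d\<bar> < e/2"
    using assms(2,3) has_integral_atLeast_truncate[of "f _" _ a "e/2"] by simp
  then obtain B where B: "\<forall>d\<in>D. \<forall>b\<ge>B d. \<exists>z. (f d has_integral z) {a..b} \<and> \<bar>z - v d\<bar> < e/2"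
    by (rule bchoice[elim_format]) blast
  define b where "b = (\<Sum>d\<in>D. \<bar>B d\<bar>)"
  have "B d \<le> b" if "d \<in> D" for d
    unfolding b_def using member_le_sum[OF _ _ assms(1), of d "\<lambda>d. \<bar>B d\<bar>"] that by simp
  then have "\<forall>d\<in>D. \<exists>z. (f d has_integral z) {a..b} \<and> \<bar>z - v d\<bar> < e/2"
    using B by blast
  then obtain z where z: "\<forall>d\<in>D. (f d has_integral z d) {a..b} \<and> \<bar>z d - v d\<bar> < e/2"
    by (rule bchoice[elim_format]) blast
  have "\<exists>\<gamma>. gauge \<gamma> \<and> (\<forall>p. p tagged_division_of {a..b} \<and> \<gamma> fine p \<longrightarrow>
          \<bar>(\<Sum>(x, K)\<in>p. Henstock_Kurzweil_Integration.content K * f d x) - z d\<bar> < e/2)"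
    if "d \<in> D" for d
  proof -
    have "(f d has_integral z d) (cbox a b)" using z that by simp
    then have "\<forall>\<epsilon>>0. \<exists>\<gamma>. gauge \<gamma> \<and> (\<forall>p. p tagged_division_of {a..b} \<and> \<gamma> fine p \<longrightarrow>
          \<bar>(\<Sum>(x, K)\<in>p. Henstock_Kurzweil_Integration.content K * f d x) - z d\<bar> < \<epsilon>)"
      unfolding has_integral real_norm_def real_scaleR_def by simp
    then show ?thesis using half_gt_zero[OF assms(3)] by blast
  qed
  then obtain \<gamma> where \<gamma>: "\<forall>d\<in>D. gauge (\<gamma> d) \<and> (\<forall>p. p tagged_division_of {a..b} \<and> \<gamma> d fine p \<longrightarrow>
          \<bar>(\<Sum>(x, K)\<in>p. Henstock_Kurzweil_Integration.content K * f d x) - z d\<bar> < e/2)"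
    by (metis bchoice)
  have "gauge (\<lambda>x. \<Inter>{\<gamma> d x | d. d \<in> D})" using \<gamma> assms(1) by (intro gauge_Inter) auto
  from fine_division_exists_real[OF this, of a b] obtain p
    where p: "p tagged_division_of {a..b}" "(\<lambda>x. \<Inter>{\<gamma> d x | d. d \<in> D}) fine p" by blast
  have "\<bar>(\<Sum>(x, K)\<in>p. Henstock_Kurzweil_Integration.content K * f d x) - v d\<bar> < e" if d: "d \<in> D" for d
  proof -
    have "\<gamma> d fine p" using p(2) d unfolding fine_Inter by blast
    then have "\<bar>(\<Sum>(x, K)\<in>p. Henstock_Kurzweil_Integration.content K * f d x) - z d\<bar> < e/2"
      using \<gamma> p(1) d by blast
    moreover have "\<bar>z d - v d\<bar> < e/2" using z d by blast
    ultimately show ?thesis by linarith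
  qed
  with p(1) show ?thesis by blast
qed

lemma approx_positive_quadrature:
  fixes g :: "'d \<Rightarrow> real \<Rightarrow> real" and h \<phi> :: "real \<Rightarrow> real"
  assumes "finite D" and h: "\<forall>x\<ge>0. 0 \<le> h x" "(h has_integral H) {0..}"
    and \<phi>: "\<forall>x\<ge>0. \<phi> x \<in> S"
    and int: "\<forall>d\<in>D. ((\<lambda>x. h x * g d (\<phi> x)) has_integral v d) {0..}"
    and "0 < e"
  shows "\<exists>w y. (\<forall>k. 0 \<le> w k \<and> y k \<in> S) \<and> (\<Sum>k<Suc (card D). w k) < H + e \<and>
           (\<forall>d\<in>D. \<bar>(\<Sum>k<Suc (card D). w k * g d (y k)) - v d\<bar> < e)"
proof -
  \<comment> \<open>The extra index \<open>None\<close> carries the total mass of \<open>h\<close>, which bounds the weights.\<close>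
  define G where "G y q = (case q of None \<Rightarrow> 1 | Some d \<Rightarrow> g d y)" for y q
  define V where "V q = (case q of None \<Rightarrow> H | Some d \<Rightarrow> v d)" for q
  define D' where "D' = insert None (Some ` D)"
  have D': "finite D'" "card D' = Suc (card D)"
    using assms(1) by (auto simp: D'_def card_image)
  have "\<forall>q\<in>D'. ((\<lambda>x. h x * G (\<phi> x) q) has_integral V q) {0..}"
    using h(2) int by (auto simp: D'_def G_def V_def)
  from riemann_sums_approx_integrals_atLeast[OF D'(1) this \<open>0 < e\<close>] obtain b p
    where p: "p tagged_division_of {0..b}"
      and RS: "\<forall>q\<in>D'. \<bar>(\<Sum>(x, K)\<in>p. Henstock_Kurzweil_Integration.content K * (h x * G (\<phi> x) q)) - V q\<bar> < e"
    by blast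
  define w0 where "w0 j = Henstock_Kurzweil_Integration.content (snd j) * h (fst j)" for j :: "real \<times> real set"
  have tag: "0 \<le> fst j" if "j \<in> p" for j
    using tag_in_interval[OF p, of "fst j" "snd j"] that by simp
  have "finite p" using p by (rule tagged_division_of_finite)
  moreover have "\<forall>j\<in>p. 0 \<le> w0 j" using tag h(1) by (simp add: w0_def)
  ultimately obtain J' w' where J': "J' \<subseteq> p" "card J' \<le> Suc (card D)" "\<forall>j\<in>J'. 0 \<le> w' j"
    "\<forall>q\<in>D'. (\<Sum>j\<in>J'. w' j * G (\<phi> (fst j)) q) = (\<Sum>j\<in>p. w0 j * G (\<phi> (fst j)) q)"
    using conic_caratheodory[OF D'(1), of p w0 "\<lambda>j. G (\<phi> (fst j))"] D'(2) by auto
  obtain f where f: "bij_betw f {..<card J'} J'"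
    using ex_bij_betw_nat_finite[OF finite_subset[OF J'(1) \<open>finite p\<close>]] by (auto simp: atLeast0LessThan)
  define w where "w k = (if k < card J' then w' (f k) else 0)" for k
  define y where "y k = (if k < card J' then \<phi> (fst (f k)) else \<phi> 0)" for k
  have "0 \<le> w k \<and> y k \<in> S" for k
  proof (cases "k < card J'")
    case True
    then have "f k \<in> J'" using f by (auto simp: bij_betw_def)
    then have "0 \<le> fst (f k)" "0 \<le> w' (f k)" using J'(1,3) tag by blast+
    then show ?thesis using True \<phi> by (simp add: w_def y_def)
  qed (use \<phi> in \<open>simp add: w_def y_def\<close>)
  moreover have approx: "\<bar>(\<Sum>k<Suc (card D). w k * G (y k) q) - V q\<bar> < e" if "q \<in> D'" for q
  proof -
    have "(\<Sum>k<Suc (card D). w k * G (y k) q)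
        = (\<Sum>k<Suc (card D). if k < card J' then w' (f k) * G (\<phi> (fst (f k))) q else 0)"
      by (intro sum.cong) (simp_all add: w_def y_def)
    also have "\<dots> = (\<Sum>j\<in>J'. w' j * G (\<phi> (fst j)) q)" by (rule sum_padded_bij_betw[OF f J'(2)])
    also have "\<dots> = (\<Sum>(x, K)\<in>p. Henstock_Kurzweil_Integration.content K * (h x * G (\<phi> x) q))"
      using J'(4) that by (simp add: w0_def split_def mult.assoc)
    finally show ?thesis using RS that by simp
  qed
  moreover have "(\<Sum>k<Suc (card D). w k) < H + e"
    using approx[of None] by (simp add: D'_def G_def V_def)
  moreover have "\<bar>(\<Sum>k<Suc (card D). w k * g d (y k)) - v d\<bar> < e" if "d \<in> D" for d
    using approx[of "Some d"] that by (simp add: D'_def G_def V_def)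
  ultimately show ?thesis by blast
qed

lemma positive_quadrature_limit:
  fixes W Y :: "nat \<Rightarrow> nat \<Rightarrow> real" and g :: "'d \<Rightarrow> real \<Rightarrow> real"
  assumes "compact S" and W: "\<forall>N. \<forall>k<K. W N k \<in> {0..C}" and Y: "\<forall>N. \<forall>k<K. Y N k \<in> S"
    and cont: "\<forall>d\<in>D. continuous_on S (g d)"
    and err: "\<forall>N. \<forall>d\<in>D. \<bar>(\<Sum>k<K. W N k * g d (Y N k)) - v d\<bar> < inverse (Suc N)"
  shows "\<exists>w y. (\<forall>k<K. 0 \<le> w k \<and> y k \<in> S) \<and> (\<forall>d\<in>D. (\<Sum>k<K. w k * g d (y k)) = v d)"
proof -
  from compact_imp_convergent_subseq_tuple[OF compact_Icc W] obtain r1 w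
    where r1: "strict_mono r1" "\<forall>k<K. w k \<in> {0..C} \<and> (\<lambda>N. W (r1 N) k) \<longlonglongrightarrow> w k"
    by blast
  have "\<forall>N. \<forall>k<K. Y (r1 N) k \<in> S" using Y by blast
  from compact_imp_convergent_subseq_tuple[OF assms(1) this] obtain r2 y
    where r2: "strict_mono r2" "\<forall>k<K. y k \<in> S \<and> (\<lambda>N. Y (r1 (r2 N)) k) \<longlonglongrightarrow> y k"
    by blast
  define r where "r = r1 \<circ> r2"
  have limW: "(\<lambda>N. W (r N) k) \<longlonglongrightarrow> w k" if "k < K" for k
    using LIMSEQ_subseq_LIMSEQ[OF conjunct2[OF r1(2)[rule_format, OF that]] r2(1)]
    by (simp add: r_def o_def)
  have limY: "(\<lambda>N. Y (r N) k) \<longlonglongrightarrow> y k" if "k < K" for k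
    using r2(2) that by (simp add: r_def)
  have "(\<Sum>k<K. w k * g d (y k)) = v d" if d: "d \<in> D" for d
  proof (rule LIMSEQ_unique)
    show "(\<lambda>N. \<Sum>k<K. W (r N) k * g d (Y (r N) k)) \<longlonglongrightarrow> (\<Sum>k<K. w k * g d (y k))"
    proof (intro tendsto_sum tendsto_mult)
      fix k assume k: "k \<in> {..<K}"
      then show "(\<lambda>N. W (r N) k) \<longlonglongrightarrow> w k" by (simp add: limW)
      have "(\<lambda>N. Y (r N) k) \<longlonglongrightarrow> y k" "y k \<in> S" using limY r2(2) k by simp_all
      from continuous_on_tendsto_compose[OF cont[rule_format, OF d] this always_eventually] Y k
      show "(\<lambda>N. g d (Y (r N) k)) \<longlonglongrightarrow> g d (y k)" by blast
    qed
    have lim0: "(\<lambda>N. inverse (real (Suc (r N)))) \<longlonglongrightarrow> 0"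
      using LIMSEQ_subseq_LIMSEQ[OF LIMSEQ_inverse_real_of_nat strict_mono_o[OF r1(1) r2(1)]]
      by (simp add: r_def o_def)
    have bound: "norm ((\<Sum>k<K. W (r N) k * g d (Y (r N) k)) - v d) \<le> inverse (real (Suc (r N)))" for N
      using err d by (simp add: less_imp_le)
    show "(\<lambda>N. \<Sum>k<K. W (r N) k * g d (Y (r N) k)) \<longlonglongrightarrow> v d"
      using Lim_null_comparison[OF always_eventually[OF allI[OF bound]] lim0] by (rule LIM_zero_cancel)
  qed
  moreover have "\<forall>k<K. 0 \<le> w k \<and> y k \<in> S" using r1(2) r2(2) by simp
  ultimately show ?thesis by blast
qed

lemma positive_quadrature:
  fixes g :: "'d \<Rightarrow> real \<Rightarrow> real" and h \<phi> :: "real \<Rightarrow> real"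
  assumes "finite D" "compact S" and h: "\<forall>x\<ge>0. 0 \<le> h x" "(h has_integral H) {0..}"
    and \<phi>: "\<forall>x\<ge>0. \<phi> x \<in> S"
    and int: "\<forall>d\<in>D. ((\<lambda>x. h x * g d (\<phi> x)) has_integral v d) {0..}"
    and cont: "\<forall>d\<in>D. continuous_on S (g d)"
  shows "\<exists>(K::nat) w y. (\<forall>k<K. 0 \<le> w k \<and> y k \<in> S) \<and> (\<forall>d\<in>D. (\<Sum>k<K. w k * g d (y k)) = v d)"
proof -
  define K where "K = Suc (card D)"
  define good where "good N w y \<longleftrightarrow> (\<forall>k<K. w k \<in> {0..H + 1} \<and> y k \<in> S) \<and>
      (\<forall>d\<in>D. \<bar>(\<Sum>k<K. w k * g d (y k)) - v d\<bar> < inverse (Suc N))" for N w y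
  have "\<forall>N. \<exists>w y. good N w y"
  proof
    fix N
    have "0 < inverse (real (Suc N))" by simp
    from approx_positive_quadrature[OF assms(1) h \<phi> int this] obtain w y
      where wy: "\<forall>k. 0 \<le> w k \<and> y k \<in> S" "(\<Sum>k<K. w k) < H + inverse (Suc N)"
        "\<forall>d\<in>D. \<bar>(\<Sum>k<K. w k * g d (y k)) - v d\<bar> < inverse (Suc N)"
      unfolding K_def by blast
    have "w k \<le> H + 1" if "k < K" for k
    proof -
      have "w k \<le> (\<Sum>k<K. w k)" using wy(1) that by (intro member_le_sum) auto
      moreover have "inverse (real (Suc N)) \<le> 1" by (simp add: field_simps)
      ultimately show ?thesis using wy(2) by linarith
    qed
    then have "good N w y" unfolding good_def using wy(1,3) by auto
    then show "\<exists>w y. good N w y" by blast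
  qed
  then obtain W where "\<forall>N. \<exists>y. good N (W N) y" by (rule choice[elim_format]) blast
  then obtain Y where "\<And>N. good N (W N) (Y N)" by (rule choice[elim_format]) blast
  then have "\<exists>w y. (\<forall>k<K. 0 \<le> w k \<and> y k \<in> S) \<and> (\<forall>d\<in>D. (\<Sum>k<K. w k * g d (y k)) = v d)"
    unfolding good_def
    by (intro positive_quadrature_limit[OF assms(2) _ _ cont, where W = W and Y = Y and C = "H + 1"]) blast+
  then show ?thesis by blast
qed

section \<open>Sums of tensor powers\<close>

lemma tensor_indices_Suc:
  "tensor_indices n (Suc m) = (\<lambda>(i, xs). i # xs) ` ({..<n} \<times> tensor_indices n m)"
proof (intro set_eqI iffI)
  fix xs assume "xs \<in> tensor_indices n (Suc m)"
  then obtain i ys where "xs = i # ys" "i < n" "ys \<in> tensor_indices n m"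
    by (cases xs) (auto simp: tensor_indices_def)
  then show "xs \<in> (\<lambda>(i, xs). i # xs) ` ({..<n} \<times> tensor_indices n m)" by force
qed (auto simp: tensor_indices_def)

lemma finite_tensor_indices: "finite (tensor_indices n m)"
  using finite_lists_length_eq[of "{..<n}" m] by (simp add: tensor_indices_def conj_commute)

lemma sum_tensor_indices_Suc:
  "(\<Sum>xs\<in>tensor_indices n (Suc m). F xs) = (\<Sum>i<n. \<Sum>xs\<in>tensor_indices n m. F (i # xs))"
proof -
  have "inj_on (\<lambda>(i, xs). i # xs) ({..<n} \<times> tensor_indices n m)" by (auto simp: inj_on_def)
  then show ?thesis
    by (simp add: tensor_indices_Suc sum.reindex sum.cartesian_product split_def)
qed

lemma sum_tensor_indices_2: "(\<Sum>xs\<in>tensor_indices n 2. F xs) = (\<Sum>i<n. \<Sum>j<n. F [i, j])"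
proof -
  have "tensor_indices n 0 = {[]}" by (auto simp: tensor_indices_def)
  then show ?thesis by (simp add: numeral_2_eq_2 sum_tensor_indices_Suc)
qed

lemma sum_tensor_indices_prod_list:
  fixes g :: "nat \<Rightarrow> real"
  shows "(\<Sum>xs\<in>tensor_indices n m. prod_list (map g xs)) = (\<Sum>i<n. g i) ^ m"
proof (induction m)
  case 0
  have "tensor_indices n 0 = {[]}" by (auto simp: tensor_indices_def)
  then show ?case by simp
next
  case (Suc m)
  have "(\<Sum>xs\<in>tensor_indices n (Suc m). prod_list (map g xs))
      = (\<Sum>i<n. g i * (\<Sum>xs\<in>tensor_indices n m. prod_list (map g xs)))"
    unfolding sum_tensor_indices_Suc by (simp add: sum_distrib_left)
  also have "\<dots> = (\<Sum>i<n. g i) ^ Suc m" by (simp add: Suc sum_distrib_right)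
  finally show ?case .
qed

lemma tensor_power_mult: "tensor_power (\<lambda>i. f i * g i) xs = tensor_power f xs * tensor_power g xs"
  by (induction xs) (simp_all add: tensor_power_def)

lemma tensor_power_scale: "tensor_power (\<lambda>i. a * f i) xs = a ^ length xs * tensor_power f xs"
  by (induction xs) (simp_all add: tensor_power_def)

lemma continuous_on_tensor_power:
  assumes "\<forall>i\<in>set xs. continuous_on S (u i)"
  shows "continuous_on S (\<lambda>y. tensor_power (\<lambda>i. u i y) xs)"
  using assms by (induction xs) (simp_all add: tensor_power_def continuous_on_mult)

lemma tensor_form_sum_tensor_powers:
  fixes u :: "nat \<Rightarrow> nat \<Rightarrow> real"
  assumes "\<forall>xs\<in>tensor_indices n m. A xs = (\<Sum>k<r. tensor_power (u k) xs)"
  shows "tensor_form n m A x = (\<Sum>k<r. (\<Sum>i<n. u k i * x i) ^ m)"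
proof -
  have "tensor_form n m A x = (\<Sum>xs\<in>tensor_indices n m. \<Sum>k<r. tensor_power (\<lambda>i. u k i * x i) xs)"
    unfolding tensor_form_def using assms
    by (intro sum.cong refl) (simp add: tensor_power_mult sum_distrib_right tensor_power_def[symmetric])
  also have "\<dots> = (\<Sum>k<r. (\<Sum>i<n. u k i * x i) ^ m)"
    by (subst sum.swap) (simp add: tensor_power_def sum_tensor_indices_prod_list)
  finally show ?thesis .
qed

lemma sum_tensor_powers_positive_definite:
  fixes u :: "nat \<Rightarrow> nat \<Rightarrow> real"
  assumes "even m" "0 < m"
    and span: "\<forall>x. \<exists>b. \<forall>i<n. x i = (\<Sum>k<r. b k * u k i)"
    and A: "\<forall>xs\<in>tensor_indices n m. A xs = (\<Sum>k<r. tensor_power (u k) xs)"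
  shows "positive_definite_tensor n m A"
  unfolding positive_definite_tensor_def
proof (intro allI impI)
  fix x :: "nat \<Rightarrow> real" assume x: "\<exists>i<n. x i \<noteq> 0"
  define s where "s k = (\<Sum>i<n. u k i * x i)" for k
  have form: "tensor_form n m A x = (\<Sum>k<r. s k ^ m)"
    unfolding s_def by (rule tensor_form_sum_tensor_powers[OF A])
  have nonneg: "\<forall>k\<in>{..<r}. 0 \<le> s k ^ m" using assms(1) by (simp add: zero_le_even_power)
  show "0 < tensor_form n m A x"
  proof (rule ccontr)
    assume "\<not> 0 < tensor_form n m A x"
    then have "(\<Sum>k<r. s k ^ m) = 0" using form nonneg sum_nonneg[of "{..<r}" "\<lambda>k. s k ^ m"] by simp
    then have "\<forall>k\<in>{..<r}. s k ^ m = 0"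
      using sum_nonneg_eq_0_iff[OF finite_lessThan, of r "\<lambda>k. s k ^ m"] nonneg by blast
    then have s: "\<forall>k<r. s k = 0" using assms(2) by simp
    obtain b where b: "\<forall>i<n. x i = (\<Sum>k<r. b k * u k i)" using span by blast
    \<comment> \<open>\<open>x\<close> lies in the span of the \<open>u k\<close> and is orthogonal to all of them.\<close>
    have "(\<Sum>i<n. x i * x i) = (\<Sum>i<n. \<Sum>k<r. b k * (u k i * x i))"
      using b by (simp add: sum_distrib_right mult_ac)
    also have "\<dots> = (\<Sum>k<r. b k * s k)"
      unfolding s_def by (subst sum.swap) (simp add: sum_distrib_left)
    also have "\<dots> = 0" using s by simp
    finally have "\<forall>i<n. x i = 0" by (simp add: sum_nonneg_eq_0_iff)
    with x show False by blast
  qed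
qed

lemma gen_pascal_tensor_symmetric: "symmetric_tensor n m (gen_pascal_tensor c)"
  unfolding symmetric_tensor_def gen_pascal_tensor_def
  by (simp only: sum_mset_sum_list[symmetric] prod_mset_prod_list[symmetric] mset_map) simp

lemma gen_pascal_tensor_replicate_zero:
  assumes "c 0 = 0"
  shows "gen_pascal_tensor c (replicate k 0 @ xs) = gen_pascal_tensor c xs"
  using assms by (simp add: gen_pascal_tensor_def sum_list_replicate)

section \<open>The Pascal tensor as a moment tensor\<close>

definition pascal_weight :: "real \<Rightarrow> real \<Rightarrow> real" where
  "pascal_weight B t = (1 + t powr B) / exp t"

text \<open>The case split avoids the junk value \<open>0 powr 0 = 0\<close>, which would break continuity at \<open>y = 0\<close>.\<close>
definition pascal_factor :: "(nat \<Rightarrow> real) \<Rightarrow> nat \<Rightarrow> real \<Rightarrow> nat \<Rightarrow> real \<Rightarrow> real" where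
  "pascal_factor c m B i y =
     (if c i = 0 then 1 else y powr c i) * (1 - y) powr (B / m - c i) *
     ((1 - y) powr B + y powr B) powr (- 1 / m) / Gamma (c i + 1)"

lemma pascal_factor_compactified:
  assumes "0 < x"
  shows "pascal_factor c m B i (x / (1 + x)) = x powr c i * (1 + x powr B) powr (- 1 / m) / Gamma (c i + 1)"
proof -
  define a where "a = 1 + x"
  have a: "0 < a" using assms by (simp add: a_def)
  have y: "1 - x / (1 + x) = 1 / a" using assms by (simp add: a_def field_simps)
  have i1: "(if c i = 0 then 1 else (x / (1 + x)) powr c i) = x powr c i / a powr c i"
    using assms by (auto simp: powr_divide a_def)
  have i2: "(1 / a) powr (B / m - c i) = a powr (c i - B / m)"
    using a by (simp add: powr_divide powr_minus_divide[symmetric])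
  have i3: "(1 / a) powr B + (x / a) powr B = (1 + x powr B) / a powr B"
    using a by (simp add: powr_divide add_divide_distrib)
  have i4: "((1 + x powr B) / a powr B) powr (- 1 / m) = (1 + x powr B) powr (- 1 / m) * a powr (B / m)"
  proof -
    have "((1 + x powr B) / a powr B) powr (- 1 / m) = (1 + x powr B) powr (- 1 / m) / (a powr B) powr (- 1 / m)"
      by (rule powr_divide)
    also have "(a powr B) powr (- 1 / m) = inverse (a powr (B / m))"
      by (simp add: powr_powr powr_minus[symmetric])
    finally show ?thesis by (simp add: divide_inverse)
  qed
  have "pascal_factor c m B i (x / (1 + x)) = x powr c i / a powr c i * a powr (c i - B / m) *
      ((1 + x powr B) powr (- 1 / m) * a powr (B / m)) / Gamma (c i + 1)"
    unfolding pascal_factor_def i1 y i2 using i3 i4 by (simp add: a_def)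
  also have "\<dots> = x powr c i * (1 + x powr B) powr (- 1 / m) *
      (a powr (c i - B / m) * a powr (B / m) / a powr c i) / Gamma (c i + 1)"
    by (simp add: field_simps)
  also have "a powr (c i - B / m) * a powr (B / m) / a powr c i = 1"
    using a by (simp add: powr_add[symmetric])
  finally show ?thesis by simp
qed

lemma pascal_weight_times_tensor_power:
  assumes "0 < x" "0 < m" "length xs = m"
  shows "pascal_weight B x * tensor_power (\<lambda>i. pascal_factor c m B i (x / (1 + x))) xs
       = x powr sum_list (map c xs) / exp x / prod_list (map (\<lambda>i. Gamma (c i + 1)) xs)"
proof -
  define z where "z = (1 + x powr B) powr (- 1 / m)"
  have z: "0 < 1 + x powr B" by (simp add: add_pos_nonneg)
  have zm: "z ^ m * (1 + x powr B) = 1"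
    using z assms(2) by (simp add: z_def powr_realpow[symmetric] powr_powr powr_neg_one)
  have "tensor_power (\<lambda>i. pascal_factor c m B i (x / (1 + x))) xs
      = x powr sum_list (map c xs) * z ^ length xs / prod_list (map (\<lambda>i. Gamma (c i + 1)) xs)"
    using assms(1)
    by (induction xs) (simp_all add: tensor_power_def pascal_factor_compactified z_def powr_add)
  then have "pascal_weight B x * tensor_power (\<lambda>i. pascal_factor c m B i (x / (1 + x))) xs
      = (z ^ m * (1 + x powr B)) * (x powr sum_list (map c xs) / exp x / prod_list (map (\<lambda>i. Gamma (c i + 1)) xs))"
    using assms(3) by (simp add: pascal_weight_def divide_inverse mult_ac)
  then show ?thesis using zm by simp
qed

lemma has_integral_pascal_weight:
  assumes "0 < B"
  shows "(pascal_weight B has_integral 1 + Gamma (B + 1)) {0..}"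
proof -
  have "((\<lambda>t. t powr (1 - 1) / exp t + t powr (B + 1 - 1) / exp t) has_integral Gamma 1 + Gamma (B + 1)) {0..}"
    using assms by (intro has_integral_add Gamma_integral_real) simp_all
  then have "(pascal_weight B has_integral Gamma 1 + Gamma (B + 1)) {0..}"
    by (rule has_integral_spike[OF negligible_sing[of 0], rotated]) (auto simp: pascal_weight_def add_divide_distrib)
  then show ?thesis by simp
qed

lemma has_integral_gen_pascal_tensor:
  assumes "0 < m" "length xs = m" "\<forall>i\<in>set xs. 0 \<le> c i"
  shows "((\<lambda>x. pascal_weight B x * tensor_power (\<lambda>i. pascal_factor c m B i (x / (1 + x))) xs)
           has_integral gen_pascal_tensor c xs) {0..}"
proof -
  define S where "S = sum_list (map c xs)"
  have "0 \<le> S" unfolding S_def using assms(3) by (induction xs) auto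
  then have "((\<lambda>x. x powr (S + 1 - 1) / exp x / prod_list (map (\<lambda>i. Gamma (c i + 1)) xs)) has_integral
      Gamma (S + 1) / prod_list (map (\<lambda>i. Gamma (c i + 1)) xs)) {0..}"
    by (intro has_integral_divide Gamma_integral_real) simp
  then show ?thesis unfolding gen_pascal_tensor_def S_def[symmetric]
    by (rule has_integral_spike[OF negligible_sing[of 0], rotated])
       (use assms in \<open>auto simp: pascal_weight_times_tensor_power S_def\<close>)
qed

lemma pascal_factor_nonneg:
  assumes "0 \<le> c i"
  shows "0 \<le> pascal_factor c m B i y"
  unfolding pascal_factor_def using assms by (auto intro!: mult_nonneg_nonneg divide_nonneg_pos)

lemma continuous_on_pascal_factor:
  assumes "0 \<le> c i" "c i < B / m" "0 < B"
  shows "continuous_on {0..1} (pascal_factor c m B i)"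
proof -
  have pos: "0 < (1 - y) powr B + y powr B" if "y \<in> {0..1}" for y :: real
    using that by (cases "y = 1") (simp_all add: add_pos_nonneg)
  have base: "continuous_on {0..1} (\<lambda>y::real. (1 - y) powr B + y powr B)"
    using assms(3) by (intro continuous_on_powr' continuous_intros) auto
  have "continuous_on {0..1} (\<lambda>y::real. if c i = 0 then 1 else y powr c i)"
  proof (cases "c i = 0")
    case False
    then have "0 < c i" using assms(1) by simp
    then have "continuous_on {0..1} (\<lambda>y::real. y powr c i)"
      by (intro continuous_on_powr'[OF continuous_on_id continuous_on_const]) auto
    then show ?thesis using False by simp
  qed simp
  moreover have "continuous_on {0..1} (\<lambda>y::real. (1 - y) powr (B / m - c i))"
    using assms(2) by (intro continuous_on_powr' continuous_intros) auto
  moreover have "continuous_on {0..1} (\<lambda>y::real. ((1 - y) powr B + y powr B) powr (- 1 / m))"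
    by (rule continuous_on_powr'[OF base continuous_on_const]) (use pos in fastforce)
  moreover have "0 < Gamma (c i + 1)" using assms(1) by (intro Gamma_real_pos) simp
  ultimately show ?thesis
    unfolding pascal_factor_def by (intro continuous_on_divide continuous_on_mult continuous_on_const) auto
qed

lemma gen_pascal_tensor_sum_tensor_powers:
  assumes "0 < m" "\<forall>i<n. 0 \<le> c i"
  shows "\<exists>(r::nat) u. (\<forall>k<r. \<forall>i<n. 0 \<le> u k i) \<and>
           (\<forall>xs\<in>tensor_indices n m. gen_pascal_tensor c xs = (\<Sum>k<r. tensor_power (u k) xs))"
proof -
  \<comment> \<open>Any \<open>B > m * max c\<close> works: it makes each factor vanish at the compactification point 1.\<close>
  define B where "B = m * (\<Sum>i<n. c i) + 1"
  have "0 \<le> (\<Sum>i<n. c i)" using assms(2) by (intro sum_nonneg) auto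
  then have B: "0 < B" by (simp add: B_def add_nonneg_pos)
  have cB: "c i < B / m" if "i < n" for i
  proof -
    have "c i \<le> (\<Sum>i<n. c i)" using assms(2) that by (intro member_le_sum) auto
    then have "m * c i \<le> m * (\<Sum>i<n. c i)" by (rule mult_left_mono) simp
    then have "m * c i < B" unfolding B_def by simp
    then show ?thesis using assms(1) by (simp add: field_simps)
  qed
  have xs: "length xs = m" "\<forall>i\<in>set xs. i < n" if "xs \<in> tensor_indices n m" for xs
    using that by (auto simp: tensor_indices_def)
  have int: "\<forall>xs\<in>tensor_indices n m.
      ((\<lambda>x. pascal_weight B x * tensor_power (\<lambda>i. pascal_factor c m B i (x / (1 + x))) xs)
        has_integral gen_pascal_tensor c xs) {0..}"
    using xs assms by (auto intro!: has_integral_gen_pascal_tensor)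
  have cont: "\<forall>xs\<in>tensor_indices n m.
      continuous_on {0..1} (\<lambda>y. tensor_power (\<lambda>i. pascal_factor c m B i y) xs)"
    using xs assms(2) cB B by (auto intro!: continuous_on_tensor_power continuous_on_pascal_factor)
  have "\<forall>x\<ge>0. 0 \<le> pascal_weight B x" by (simp add: pascal_weight_def)
  moreover have "\<forall>x\<ge>0. x / (1 + x) \<in> {0..1::real}" by simp
  ultimately obtain r :: nat and w y where wy: "\<forall>k<r. 0 \<le> w k \<and> y k \<in> {0..1}"
    "\<forall>xs\<in>tensor_indices n m.
       (\<Sum>k<r. w k * tensor_power (\<lambda>i. pascal_factor c m B i (y k)) xs) = gen_pascal_tensor c xs"
    using positive_quadrature[OF finite_tensor_indices compact_Icc _ has_integral_pascal_weight[OF B] _ int cont]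
    by blast
  define u where "u k = (\<lambda>i. root m (w k) * pascal_factor c m B i (y k))" for k
  have "\<forall>k<r. \<forall>i<n. 0 \<le> u k i"
    using wy(1) assms(2) by (simp add: u_def pascal_factor_nonneg real_root_ge_zero)
  moreover have "\<forall>xs\<in>tensor_indices n m. gen_pascal_tensor c xs = (\<Sum>k<r. tensor_power (u k) xs)"
  proof
    fix xs assume "xs \<in> tensor_indices n m"
    moreover have "tensor_power (u k) xs = w k * tensor_power (\<lambda>i. pascal_factor c m B i (y k)) xs"
      if "k < r" "length xs = m" for k
      using that wy(1) assms(1) by (simp add: u_def tensor_power_scale)
    ultimately show "gen_pascal_tensor c xs = (\<Sum>k<r. tensor_power (u k) xs)"
      using wy(2) xs(1) by simp
  qed
  ultimately show ?thesis by blast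
qed

lemma gen_pascal_matrix_eq_gram:
  fixes u :: "nat \<Rightarrow> nat \<Rightarrow> real"
  assumes "c 0 = 0" "0 < n" "2 \<le> m" "i < n" "j < n"
    and A: "\<forall>xs\<in>tensor_indices n m. gen_pascal_tensor c xs = (\<Sum>k<r. tensor_power (u k) xs)"
  shows "gen_pascal_tensor c [i, j] = (\<Sum>k<r. u k 0 ^ (m - 2) * u k i * u k j)"
proof -
  have "replicate (m - 2) 0 @ [i, j] \<in> tensor_indices n m"
    using assms(2-5) by (auto simp: tensor_indices_def)
  then have "gen_pascal_tensor c (replicate (m - 2) 0 @ [i, j]) = (\<Sum>k<r. u k 0 ^ (m - 2) * u k i * u k j)"
    using A by (simp add: tensor_power_def mult.assoc)
  then show ?thesis by (simp add: gen_pascal_tensor_replicate_zero[where c = c, OF assms(1)])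
qed

lemma positive_definite_tensor_2D:
  assumes "positive_definite_tensor n 2 A" "\<exists>i<n. z i \<noteq> 0"
  shows "0 < (\<Sum>i<n. \<Sum>j<n. A [i, j] * (z i * z j))"
  using assms by (simp add: positive_definite_tensor_def tensor_form_def sum_tensor_indices_2)

theorem theorem4p2:
  fixes n :: nat and c :: "nat \<Rightarrow> real"
  assumes "n \<ge> 2"
    and "\<forall>i<n. c i \<ge> 0"
    and "c 0 = 0"
    and "positive_definite_tensor n 2 (gen_pascal_tensor c)"
  shows "\<forall>m\<ge>2. strongly_completely_positive n m (gen_pascal_tensor c) \<and>
           (even m \<longrightarrow> positive_definite_tensor n m (gen_pascal_tensor c))"
proof (intro allI impI)
  fix m :: nat assume m: "2 \<le> m"
  then have "0 < m" by simp
  with gen_pascal_tensor_sum_tensor_powers[OF _ assms(2)] obtain r :: nat and u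
    where u: "\<forall>k<r. \<forall>i<n. 0 \<le> u k i"
      and A: "\<forall>xs\<in>tensor_indices n m. gen_pascal_tensor c xs = (\<Sum>k<r. tensor_power (u k) xs)"
    by blast
  have gram: "\<forall>i<n. \<forall>j<n. gen_pascal_tensor c [i, j] = (\<Sum>k<r. u k 0 ^ (m - 2) * u k i * u k j)"
    using gen_pascal_matrix_eq_gram[OF assms(3) _ m _ _ A] assms(1) by simp
  have pd: "\<forall>z. (\<exists>i<n. z i \<noteq> 0) \<longrightarrow> 0 < (\<Sum>i<n. \<Sum>j<n. gen_pascal_tensor c [i, j] * (z i * z j))"
    using positive_definite_tensor_2D[OF assms(4)] by blast
  have span: "\<forall>x. \<exists>b. \<forall>i<n. x i = (\<Sum>k<r. b k * u k i)"
    using gram_positive_definite_imp_span[OF gram pd] by blast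
  have "strongly_completely_positive n m (gen_pascal_tensor c)"
    unfolding strongly_completely_positive_def using gen_pascal_tensor_symmetric u span A by blast
  moreover have "positive_definite_tensor n m (gen_pascal_tensor c)" if "even m"
    using sum_tensor_powers_positive_definite[OF that \<open>0 < m\<close> span A] .
  ultimately show "strongly_completely_positive n m (gen_pascal_tensor c) \<and>
      (even m \<longrightarrow> positive_definite_tensor n m (gen_pascal_tensor c))" by blast
qed

end
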